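(* Let $C\ge1$ and run Algorithm 3 (described in the context) on an instance of dynamic bin packing with migration delays. Then any item whose initial duration satisfies $d\in[M\sqrt{C},(M+1)\sqrt{C})$ for an integer $M\ge0$ has delayed duration $\tilde d\le d+M\cdot C$. In particular, $\tilde d\le O(\sqrt{C})\cdot d$.
   Context: Dynamic bin packing with migration delays: bins have capacity $1$; items arrive online at times $a_i\ge0$ with size $s_i\in[0,1]$ and initial duration $d_i>0$ (unknown at arrival). Each time an item is migrated (moved to another bin), its duration is increased by $C$; the delayed duration of item $i$ is $\tilde d_i=d_i+(\text{number of migrations of } i)\cdot C$, and the item leaves the system at time $a_i+\tilde d_i$. FirstFit on a pool of bins places an item into the earliest-opened bin of that pool with enough remaining capacity, or opens a new bin in the pool. Algorithm 3: maintain two disjoint pools of bins, $I_s$ (small) and $I_b$ (big). Each arriving item is placed into $I_s$ using FirstFit. When an item has been in $I_s$ for exactly $\sqrt{C}$ time, it is migrated into $I_b$ using FirstFit. When an item has been in $I_b$ for exactly $C+\sqrt{C}$ time since its most recent migration, it is migrated again, into $I_b$ using FirstFit. *)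

theory Defs
  imports Complex_Main
begin

text \<open>The bin chosen by FirstFit never
influences when an item is migrated or how its duration changes, so the delay of an
item is determined by the timing rules of Algorithm 3 alone.

An item arrives at time a and is put into pool I_s.  entry_time C a k is the time at
which the item entered its current pool after k migrations (k = 0: arrival into I_s;
k \<ge> 1: the k-th migration into I_b).\<close>

fun entry_time :: "real \<Rightarrow> real \<Rightarrow> nat \<Rightarrow> real" where
  "entry_time C a 0 = a"
| "entry_time C a (Suc k) =
     entry_time C a k + (if k = 0 then sqrt C else C + sqrt C)"

text \<open>Time at which the (k+1)-st migration is scheduled by Algorithm 3: after sqrt C time
in I_s (k = 0), or after C + sqrt C time since the most recent migration (k \<ge> 1).\<close>

definition next_migration_time :: "real \<Rightarrow> real \<Rightarrow> nat \<Rightarrow> real" where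
  "next_migration_time C a k = entry_time C a (Suc k)"

text \<open>Departure time of an item (arrival a, initial duration d) that has been migrated
k times so far: a + d + k C.  The item is in the system during [a, departure).\<close>

definition departure_time :: "real \<Rightarrow> real \<Rightarrow> real \<Rightarrow> nat \<Rightarrow> real" where
  "departure_time C a d k = a + d + real k * C"

text \<open>alg3_migrations C a d n: under Algorithm 3, the item (arrival a, initial duration d)
is migrated exactly n times: each of the migrations 1..n takes place (the item is still
in the system at its scheduled time), and the (n+1)-st does not (the item has left).\<close>

definition alg3_migrations :: "real \<Rightarrow> real \<Rightarrow> real \<Rightarrow> nat \<Rightarrow> bool" where
  "alg3_migrations C a d n \<longleftrightarrow>
     (\<forall>k<n. next_migration_time C a k < departure_time C a d k) \<and>
     \<not> (next_migration_time C a n < departure_time C a d n)"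

definition delayed_duration :: "real \<Rightarrow> real \<Rightarrow> nat \<Rightarrow> real" where
  "delayed_duration C d n = d + real n * C"

end

theory Submission
  imports Defs
begin

text \<open>The (k+1)-st migration is scheduled at a + (k+1) sqrt C + k C, while with k migrations
so far the item would leave at a + d + k C.  The delay terms k C cancel, so the migration
takes place iff (k+1) sqrt C < d.  Hence an item migrated n times has n sqrt C \<le> d, which
forces n \<le> M and gives n C = (n sqrt C) sqrt C \<le> sqrt C d.\<close>

lemma entry_time_Suc_eq: "entry_time C a (Suc k) = a + (real k + 1) * sqrt C + real k * C"
  by (induction k) (auto simp: algebra_simps)

lemma next_migration_before_departure_iff:
  "next_migration_time C a k < departure_time C a d k \<longleftrightarrow> (real k + 1) * sqrt C < d"
  unfolding next_migration_time_def departure_time_def entry_time_Suc_eq by auto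

lemma alg3_migrations_mult_sqrt_le:
  assumes "alg3_migrations C a d n" and "0 \<le> d"
  shows "real n * sqrt C \<le> d"
proof (cases n)
  case 0
  then show ?thesis using assms(2) by simp
next
  case (Suc m)
  then have "next_migration_time C a m < departure_time C a d m"
    using assms(1) unfolding alg3_migrations_def by blast
  then show ?thesis
    using Suc by (simp add: next_migration_before_departure_iff add.commute)
qed

theorem lemma15:
  fixes C a d :: real and M n :: nat
  assumes "C \<ge> 1" and "a \<ge> 0" and "d > 0"
    and "real M * sqrt C \<le> d" and "d < (real M + 1) * sqrt C"
    and "alg3_migrations C a d n"
  shows "delayed_duration C d n \<le> d + real M * C
         \<and> delayed_duration C d n \<le> (1 + sqrt C) * d"
proof -
  have n_sqrt_le: "real n * sqrt C \<le> d"
    using assms(3,6) by (simp add: alg3_migrations_mult_sqrt_le)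
  have "real n * sqrt C < (real M + 1) * sqrt C"
    using n_sqrt_le assms(5) by linarith
  then have "n \<le> M"
    using assms(1) by (simp add: mult_less_cancel_right)
  then have "real n * C \<le> real M * C"
    using assms(1) by (simp add: mult_right_mono)
  moreover have "real n * C \<le> sqrt C * d"
  proof -
    have "real n * C = real n * sqrt C * sqrt C"
      using assms(1) by (simp add: mult.assoc)
    also have "\<dots> \<le> d * sqrt C"
      using n_sqrt_le assms(1) by (intro mult_right_mono) auto
    finally show ?thesis by (simp add: mult.commute)
  qed
  ultimately show ?thesis
    unfolding delayed_duration_def by (simp add: algebra_simps)
qed

end
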